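(* Let $d_1,d_2,b_1,b_2$ be integers with $2\leq b_i\leq d_i/2$ for $i=1,2$. For $i=1,2$ let $T_i\in S^{d_i}\mathbb{C}^2$ be a binary form with cactus rank $c_{d_i}(T_i)=b_i$ and $[T_i]\in\langle\nu_{d_i}(Z[b_i])\rangle$, and let $T=T_1\otimes T_2$. Then $R_{d_1,d_2}(T)\leq d_1b_2+d_2b_1+b_1b_2-1$.
   Context: Identify $S^d\mathbb{C}^2$ with binary forms of degree $d$ in a basis $\{x,y\}$, with dual coordinates $\partial_x,\partial_y$. For $b\geq1$, $Z[b]\subseteq\mathbb{P}^1$ is the zero-dimensional scheme of degree $b$ supported at $[x]$, with ideal $(\partial_y^b)$. $\nu_d:\mathbb{P}^1\to\mathbb{P}(S^d\mathbb{C}^2)$, $[v]\mapsto[v^d]$, is the Veronese embedding; $\langle Y\rangle$ denotes linear span of a subscheme. The cactus rank $c_d(f)$ is the minimal degree of a zero-dimensional scheme $A\subseteq\mathbb{P}^1$ with $[f]\in\langle\nu_d(A)\rangle$. The partially symmetric rank $R_{d_1,d_2}(T)$ is the minimal $r$ with $T=\sum_{i=1}^r v_{i,1}^{\otimes d_1}\otimes v_{i,2}^{\otimes d_2}$, $v_{i,j}\in\mathbb{C}^2$. *)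

theory Defs
  imports Complex_Main
begin

text \<open>A binary form f of degree d in S^d C^2 is represented by its coefficient function
f :: nat => complex, where f i is the coefficient of x^(d-i) y^i (only i <= d matters).
A form g of degree b in the dual variables is represented likewise: g k is the
coefficient of dx^(b-k) dy^k.  A zero-dimensional subscheme A of P^1 of degree b
is Proj of C[dx,dy]/(g) for a nonzero dual form g of degree b (determined up to scalar);
its homogeneous ideal is (g).\<close>

definition form_nonzero :: "nat \<Rightarrow> (nat \<Rightarrow> complex) \<Rightarrow> bool" where
  "form_nonzero b g \<longleftrightarrow> (\<exists>k\<le>b. g k \<noteq> 0)"

definition dual_mult :: "nat \<Rightarrow> (nat \<Rightarrow> complex) \<Rightarrow> nat \<Rightarrow> (nat \<Rightarrow> complex) \<Rightarrow> nat \<Rightarrow> complex" where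
  "dual_mult b g e h k = (\<Sum>j\<in>{j. j \<le> b \<and> j \<le> k \<and> k - j \<le> e}. g j * h (k - j))"

text \<open>Apolarity pairing of a dual form u of degree d with a form f of degree d:
dx^(d-k) dy^k applied to x^(d-i) y^i equals (d-k)! k! if i = k and 0 otherwise.\<close>
definition apolar_pair :: "nat \<Rightarrow> (nat \<Rightarrow> complex) \<Rightarrow> (nat \<Rightarrow> complex) \<Rightarrow> complex" where
  "apolar_pair d u f = (\<Sum>k\<le>d. u k * f k * of_nat (fact (d - k) * fact k))"

text \<open>[f] lies in the linear span of nu_d(A), where A is the scheme with ideal (g), g of
degree b: the linear forms on S^d vanishing on nu_d(A) are exactly I(A)_d = g * (dual forms
of degree d - b), and the span is their common zero locus.\<close>
definition in_span_scheme :: "nat \<Rightarrow> nat \<Rightarrow> (nat \<Rightarrow> complex) \<Rightarrow> (nat \<Rightarrow> complex) \<Rightarrow> bool" where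
  "in_span_scheme d b g f \<longleftrightarrow>
     (b \<le> d \<longrightarrow> (\<forall>h. apolar_pair d (dual_mult b g (d - b) h) f = 0))"

definition Zgen :: "nat \<Rightarrow> nat \<Rightarrow> complex" where
  "Zgen b k = (if k = b then 1 else 0)"

definition cactus_rank :: "nat \<Rightarrow> (nat \<Rightarrow> complex) \<Rightarrow> nat" where
  "cactus_rank d f = (LEAST b. \<exists>g. form_nonzero b g \<and> in_span_scheme d b g f)"

text \<open>A partially symmetric tensor in S^d1 C^2 (x) S^d2 C^2 as a bihomogeneous form:
T i j is the coefficient of x1^(d1-i) y1^i x2^(d2-j) y2^j.  The tensor
v1^(x)d1 (x) v2^(x)d2 with v = (p,q) corresponds to (p x1 + q y1)^d1 (p' x2 + q' y2)^d2.\<close>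
definition pow_coeff :: "nat \<Rightarrow> complex \<times> complex \<Rightarrow> nat \<Rightarrow> complex" where
  "pow_coeff d v i = of_nat (d choose i) * fst v ^ (d - i) * snd v ^ i"

definition tensor_prod :: "(nat \<Rightarrow> complex) \<Rightarrow> (nat \<Rightarrow> complex) \<Rightarrow> nat \<Rightarrow> nat \<Rightarrow> complex" where
  "tensor_prod f1 f2 i j = f1 i * f2 j"

definition ps_rank :: "nat \<Rightarrow> nat \<Rightarrow> (nat \<Rightarrow> nat \<Rightarrow> complex) \<Rightarrow> nat" where
  "ps_rank d1 d2 T = (LEAST r. \<exists>v1 v2 :: nat \<Rightarrow> complex \<times> complex.
      \<forall>i\<le>d1. \<forall>j\<le>d2. T i j = (\<Sum>l<r. pow_coeff d1 (v1 l) i * pow_coeff d2 (v2 l) j))"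

end

theory Submission
  imports Defs "HOL-Computational_Algebra.Fundamental_Theorem_Algebra" "HOL-Number_Theory.Cong"
begin

(* T_i lies in the span of nu_{d_i}(Z[b_i]) exactly when its coefficients vanish from index b_i on,
   so all coefficients of T = T1 (x) T2 lie in the box [0, b1) x [0, b2).  If exponents alpha, beta
   are such that alpha i + beta j mod M separates every point of this box from all other points of
   [0, d1] x [0, d2], then, with omega a primitive M-th root of unity, discrete Fourier inversion
   writes T as a sum over l < M of mu_l (x1 + omega^(l alpha) y1)^d1 (x2 + omega^(l beta) y2)^d2,
   so R(T) <= M.  Writing g = gcd(b1, b2), b_i = g p_i and p2 t = p1 s + 1, the exponents
   alpha = p2 + N s, beta = p1 + N t with N = p2 d1 + p1 d2 + 1 separate modulo
   M = N g = d1 b2 + d2 b1 + g, and g <= b1 b2 - 1. *)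

lemma dual_mult_Zgen:
  "dual_mult b (Zgen b) e h k = (if b \<le> k \<and> k - b \<le> e then h (k - b) else 0)"
proof -
  have "dual_mult b (Zgen b) e h k
      = (\<Sum>j\<in>{j. j \<le> b \<and> j \<le> k \<and> k - j \<le> e}. if j = b then h (k - j) else 0)"
    unfolding dual_mult_def Zgen_def by (intro sum.cong) auto
  also have "\<dots> = (if b \<le> k \<and> k - b \<le> e then h (k - b) else 0)"
    by (simp add: sum.delta finite_subset[of _ "{..b}"])
  finally show ?thesis .
qed

lemma apolar_pair_delta:
  assumes "i \<le> d"
  shows "apolar_pair d (\<lambda>k. if k = i then 1 else 0) f = f i * of_nat (fact (d - i) * fact i)"
  using assms by (simp add: apolar_pair_def if_distrib if_distribR sum.delta cong: if_cong)

lemma in_span_scheme_Zgen_coeff_eq_0: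
  assumes "in_span_scheme d b (Zgen b) f" "b \<le> i" "i \<le> d"
  shows "f i = 0"
proof -
  have "dual_mult b (Zgen b) (d - b) (\<lambda>k. if k = i - b then 1 else 0)
      = (\<lambda>k. if k = i then 1 else 0)"
    using assms(2,3) by (auto simp: dual_mult_Zgen intro!: ext)
  with assms have "apolar_pair d (\<lambda>k. if k = i then 1 else 0) f = 0"
    unfolding in_span_scheme_def by (metis order.trans)
  with assms(3) show ?thesis by (simp add: apolar_pair_delta)
qed

lemma cis_eq_1_iff: "cis x = 1 \<longleftrightarrow> cos x = 1"
  by (auto simp: complex_eq_iff cos_one_sin_zero)

lemma cis_root_unity_power_eq_1_iff:
  fixes M n :: nat
  assumes "0 < M"
  shows "cis (2 * pi / M) ^ n = 1 \<longleftrightarrow> M dvd n"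
proof -
  have "cis (2 * pi / M) ^ n = 1 \<longleftrightarrow> (\<exists>k::int. 2 * pi * n / M = k * 2 * pi)"
    by (simp add: DeMoivre cis_eq_1_iff cos_one_2pi_int mult_ac)
  also have "\<dots> \<longleftrightarrow> (\<exists>k::int. real n = k * M)"
    using assms by (auto simp: field_simps)
  also have "\<dots> \<longleftrightarrow> M dvd n"
    by (metis dvd_def mult.commute of_int_eq_iff of_int_of_nat_eq of_nat_dvd_iff)
  finally show ?thesis .
qed

lemma sum_root_unity_powers:
  fixes M n :: nat
  assumes "0 < M"
  defines "\<omega> \<equiv> cis (2 * pi / M)"
  shows "(\<Sum>l<M. (\<omega> ^ l) ^ n) = (if M dvd n then of_nat M else 0)"
proof -
  have root_iff: "\<omega> ^ m = 1 \<longleftrightarrow> M dvd m" for m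
    unfolding \<omega>_def using assms(1) by (rule cis_root_unity_power_eq_1_iff)
  have "(\<Sum>l<M. (\<omega> ^ l) ^ n) = (\<Sum>l<M. (\<omega> ^ n) ^ l)"
    by (intro sum.cong refl) (simp only: power_mult[symmetric] mult.commute)
  also have "\<dots> = (if M dvd n then of_nat M else 0)"
  proof (cases "M dvd n")
    case True
    then have "\<omega> ^ n = 1" using root_iff by simp
    with True show ?thesis by simp
  next
    case False
    have "(\<omega> ^ n) ^ M = (\<omega> ^ M) ^ n"
      by (simp only: power_mult[symmetric] mult.commute)
    then have "(\<omega> ^ n) ^ M = 1" using root_iff[of M] by simp
    moreover have "\<omega> ^ n \<noteq> 1" using False root_iff by simp
    ultimately show ?thesis using False by (simp add: geometric_sum)
  qed
  finally show ?thesis .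
qed

lemma dvd_pred_mult_add_iff_cong:
  fixes M m n :: nat
  assumes "0 < M"
  shows "M dvd (M - 1) * m + n \<longleftrightarrow> [m = n] (mod M)"
proof -
  have "M dvd (M - 1) * m + n \<longleftrightarrow> [(M - 1) * m + n + m = m] (mod M)"
    by (simp only: cong_add_rcancel_0_nat cong_0_iff)
  also have "(M - 1) * m + n + m = M * m + n"
    using assms by (cases M) auto
  also have "[M * m + n = m] (mod M) \<longleftrightarrow> [m = n] (mod M)"
    unfolding cong_def by (simp add: eq_commute)
  finally show ?thesis .
qed

text \<open>Exponents are natural numbers, so \<open>(M - 1) * \<phi> a\<close> stands for \<open>-\<phi> a\<close> modulo \<open>M\<close>.\<close>

lemma sum_root_unity_interpolation:
  fixes M n :: nat and \<phi> :: "'a \<Rightarrow> nat" and B :: "'a \<Rightarrow> complex"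
  assumes "0 < M" "finite S"
  defines "\<omega> \<equiv> cis (2 * pi / M)"
  shows "(\<Sum>l<M. (\<Sum>a\<in>S. B a * (\<omega> ^ l) ^ ((M - 1) * \<phi> a)) * (\<omega> ^ l) ^ n)
       = of_nat M * (\<Sum>a | a \<in> S \<and> [\<phi> a = n] (mod M). B a)"
proof -
  have "(\<Sum>l<M. (\<Sum>a\<in>S. B a * (\<omega> ^ l) ^ ((M - 1) * \<phi> a)) * (\<omega> ^ l) ^ n)
      = (\<Sum>a\<in>S. B a * (\<Sum>l<M. (\<omega> ^ l) ^ ((M - 1) * \<phi> a + n)))"
    by (simp add: sum_distrib_left sum_distrib_right power_add mult_ac sum.swap[of _ "{..<M}"])
  also have "\<dots> = (\<Sum>a\<in>S. B a * (if [\<phi> a = n] (mod M) then of_nat M else 0))"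
    unfolding \<omega>_def sum_root_unity_powers[OF assms(1)] dvd_pred_mult_add_iff_cong[OF assms(1)] ..
  also have "\<dots> = (\<Sum>a\<in>S. if [\<phi> a = n] (mod M) then of_nat M * B a else 0)"
    by (intro sum.cong) auto
  also have "\<dots> = of_nat M * (\<Sum>a | a \<in> S \<and> [\<phi> a = n] (mod M). B a)"
    using assms(2) by (simp add: sum.inter_filter sum_distrib_left if_distrib cong: if_cong)
  finally show ?thesis .
qed

text \<open>Modulo \<open>N\<close> the congruence reduces to \<open>p2 x + p1 y \<equiv> 0\<close>, which smallness turns into an
  equation, so \<open>(x, y) = k (p1, -p2)\<close>; modulo \<open>N g\<close> it then says \<open>g dvd k\<close>, and the lower
  bounds on \<open>x\<close> and \<open>y\<close> leave only \<open>k = 0\<close>.\<close>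

lemma kernel_vector_eq_0:
  fixes p1 p2 s t N g x y :: int
  assumes bezout: "p2 * t - p1 * s = 1" and "0 < p1" "0 < p2"
    and small: "\<bar>p2 * x + p1 * y\<bar> < N"
    and x: "- (g * p1) < x" and y: "- (g * p2) < y"
    and kernel: "N * g dvd (p2 + N * s) * x + (p1 + N * t) * y"
  shows "x = 0 \<and> y = 0"
proof -
  have split: "(p2 + N * s) * x + (p1 + N * t) * y = (p2 * x + p1 * y) + N * (s * x + t * y)"
    by (simp add: algebra_simps)
  have N_dvd: "N dvd p2 * x + p1 * y"
    using dvd_mult_left[OF kernel] by (simp add: split dvd_add_left_iff)
  have lin: "p2 * x + p1 * y = 0"
  proof (rule ccontr)
    assume "p2 * x + p1 * y \<noteq> 0"
    from dvd_imp_le_int[OF this N_dvd] small show False by linarith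
  qed
  have "coprime p1 p2"
  proof (rule coprimeI)
    fix c assume "c dvd p1" "c dvd p2"
    then have "c dvd p2 * t - p1 * s" by simp
    with bezout show "is_unit c" by simp
  qed
  moreover have "p1 dvd p2 * x"
    using lin by (metis add.commute add_eq_0_iff dvd_minus_iff dvd_triv_left)
  ultimately obtain k where xk: "x = p1 * k"
    by (metis coprime_dvd_mult_right_iff dvdE)
  have "p1 * (y + p2 * k) = 0" using lin by (simp add: xk algebra_simps)
  then have yk: "y = - (p2 * k)"
    using \<open>0 < p1\<close> by simp
  have "s * x + t * y = - k"
    using bezout by (simp add: xk yk algebra_simps)
  then have "N * g dvd N * (- k)"
    using kernel by (simp add: split lin)
  moreover have "N \<noteq> 0" using small by linarith
  ultimately have "g dvd k" by simp
  have "k = 0"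
  proof (rule ccontr)
    assume "k \<noteq> 0"
    with \<open>g dvd k\<close> have "\<bar>g\<bar> \<le> \<bar>k\<bar>" using dvd_imp_le_int by blast
    show False
    proof (cases "0 < k")
      case True
      with \<open>\<bar>g\<bar> \<le> \<bar>k\<bar>\<close> have "g * p2 \<le> k * p2"
        using \<open>0 < p2\<close> by (intro mult_right_mono) auto
      with y yk show False by (simp add: mult.commute)
    next
      case False
      with \<open>\<bar>g\<bar> \<le> \<bar>k\<bar>\<close> have "g * p1 \<le> (- k) * p1"
        using \<open>0 < p1\<close> by (intro mult_right_mono) auto
      with x xk show False by (simp add: mult.commute)
    qed
  qed
  with xk yk show ?thesis by simp
qed

lemma separating_exponents:
  fixes b1 b2 d1 d2 :: nat
  assumes "0 < b1" "0 < b2" "b1 \<le> d1" "b2 \<le> d2"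
  obtains \<alpha> \<beta> :: nat where
    "\<And>a b i j. a < b1 \<Longrightarrow> b < b2 \<Longrightarrow> i \<le> d1 \<Longrightarrow> j \<le> d2 \<Longrightarrow>
       [\<alpha> * i + \<beta> * j = \<alpha> * a + \<beta> * b] (mod d1 * b2 + d2 * b1 + gcd b1 b2) \<Longrightarrow> i = a \<and> j = b"
proof -
  define g where "g = gcd b1 b2"
  define p1 where "p1 = b1 div g"
  define p2 where "p2 = b2 div g"
  have b1: "b1 = g * p1" and b2: "b2 = g * p2"
    by (simp_all add: g_def p1_def p2_def)
  have "0 < p1" "0 < p2"
    using assms(1,2) b1 b2 by (auto intro: gr0I)
  have "coprime p2 p1"
    unfolding p1_def p2_def g_def using assms(2)
    by (metis div_gcd_coprime gcd.commute less_not_refl2)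
  then obtain t s where bezout: "p2 * t = p1 * s + 1"
    using bezout_nat[of p2 p1] \<open>0 < p2\<close> by (auto simp: coprime_iff_gcd_eq_1)
  define N where "N = p2 * d1 + p1 * d2 + 1"
  have modulus: "d1 * b2 + d2 * b1 + gcd b1 b2 = N * g"
    unfolding g_def[symmetric] by (simp add: N_def b1 b2 algebra_simps)
  show ?thesis
  proof (rule that[of "p2 + N * s" "p1 + N * t"])
    fix a b i j
    assume "a < b1" "b < b2" "i \<le> d1" "j \<le> d2"
      and "[(p2 + N * s) * i + (p1 + N * t) * j = (p2 + N * s) * a + (p1 + N * t) * b]
             (mod d1 * b2 + d2 * b1 + gcd b1 b2)"
    then have "int (N * g) dvd
        int ((p2 + N * s) * i + (p1 + N * t) * j) - int ((p2 + N * s) * a + (p1 + N * t) * b)"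
      by (simp only: modulus flip: cong_int_iff cong_iff_dvd_diff)
    also have "int ((p2 + N * s) * i + (p1 + N * t) * j) - int ((p2 + N * s) * a + (p1 + N * t) * b)
        = (int p2 + int N * int s) * (int i - int a) + (int p1 + int N * int t) * (int j - int b)"
      by (simp add: algebra_simps)
    finally have kernel: "int (N * g) dvd
        (int p2 + int N * int s) * (int i - int a) + (int p1 + int N * int t) * (int j - int b)" .
    have "\<bar>int i - int a\<bar> \<le> int d1" "\<bar>int j - int b\<bar> \<le> int d2"
      using \<open>a < b1\<close> \<open>b < b2\<close> \<open>i \<le> d1\<close> \<open>j \<le> d2\<close> assms(3,4) by linarith+
    then have "\<bar>int p2 * (int i - int a)\<bar> \<le> int p2 * int d1"
      and "\<bar>int p1 * (int j - int b)\<bar> \<le> int p1 * int d2"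
      by (simp_all add: abs_mult mult_left_mono)
    then have small: "\<bar>int p2 * (int i - int a) + int p1 * (int j - int b)\<bar> < int N"
      unfolding N_def of_nat_add of_nat_mult of_nat_1 by linarith
    have "int p2 * int t - int p1 * int s = 1"
      using arg_cong[OF bezout, of int] by simp
    moreover have "- (int g * int p1) < int i - int a" "- (int g * int p2) < int j - int b"
      using \<open>a < b1\<close> \<open>b < b2\<close> b1 b2 by (simp_all flip: of_nat_mult)
    ultimately have "int i - int a = 0 \<and> int j - int b = 0"
      using \<open>0 < p1\<close> \<open>0 < p2\<close> small kernel[unfolded of_nat_mult]
      by (intro kernel_vector_eq_0) simp_all
    then show "i = a \<and> j = b" by simp
  qed
qed

lemma pow_coeff_scale:
  assumes "i \<le> d"
  shows "pow_coeff d (c, c * z) i = of_nat (d choose i) * c ^ d * z ^ i"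
proof -
  have "c ^ (d - i) * c ^ i = c ^ d" using assms by (simp flip: power_add)
  then show ?thesis unfolding pow_coeff_def by (simp add: power_mult_distrib mult_ac)
qed

lemma separated_interpolation:
  fixes B :: "nat \<times> nat \<Rightarrow> complex" and \<alpha> \<beta> M :: nat
  assumes "0 < M" "i \<le> d1" "j \<le> d2"
    and separating: "\<And>a b. a < b1 \<Longrightarrow> b < b2 \<Longrightarrow>
       [\<alpha> * i + \<beta> * j = \<alpha> * a + \<beta> * b] (mod M) \<Longrightarrow> i = a \<and> j = b"
  defines "\<omega> \<equiv> cis (2 * pi / M)" and "\<phi> \<equiv> \<lambda>(a, b). \<alpha> * a + \<beta> * b"
  shows "(\<Sum>l<M. (\<Sum>p\<in>{..<b1} \<times> {..<b2}. B p * (\<omega> ^ l) ^ ((M - 1) * \<phi> p)) / of_nat M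
            * (\<omega> ^ l) ^ \<phi> (i, j))
       = (if i < b1 \<and> j < b2 then B (i, j) else 0)"
proof -
  let ?S = "{..<b1} \<times> {..<b2}"
  have "p = (i, j)" if "p \<in> ?S" "[\<phi> p = \<phi> (i, j)] (mod M)" for p
  proof -
    obtain a b where p: "p = (a, b)" by fastforce
    with that have "a < b1" "b < b2" "[\<alpha> * a + \<beta> * b = \<alpha> * i + \<beta> * j] (mod M)"
      by (auto simp: \<phi>_def)
    with p show ?thesis using separating cong_sym by blast
  qed
  then have "{p. p \<in> ?S \<and> [\<phi> p = \<phi> (i, j)] (mod M)}
      = (if i < b1 \<and> j < b2 then {(i, j)} else {})"
    by auto
  moreover have "finite ?S" by simp
  ultimately show ?thesis
    using sum_root_unity_interpolation[OF \<open>0 < M\<close>, of ?S B \<phi> "\<phi> (i, j)"] \<open>0 < M\<close>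
    by (simp add: \<omega>_def sum_divide_distrib[symmetric])
qed

lemma ps_rank_tensor_prod_le:
  fixes T1 T2 :: "nat \<Rightarrow> complex" and \<alpha> \<beta> M :: nat
  assumes "0 < d1" "0 < M"
    and supp1: "\<And>i. b1 \<le> i \<Longrightarrow> i \<le> d1 \<Longrightarrow> T1 i = 0"
    and supp2: "\<And>j. b2 \<le> j \<Longrightarrow> j \<le> d2 \<Longrightarrow> T2 j = 0"
    and separating: "\<And>a b i j. a < b1 \<Longrightarrow> b < b2 \<Longrightarrow> i \<le> d1 \<Longrightarrow> j \<le> d2 \<Longrightarrow>
       [\<alpha> * i + \<beta> * j = \<alpha> * a + \<beta> * b] (mod M) \<Longrightarrow> i = a \<and> j = b"
  shows "ps_rank d1 d2 (tensor_prod T1 T2) \<le> M"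
proof -
  define \<omega> where "\<omega> = cis (2 * pi / M)"
  define \<phi> where "\<phi> = (\<lambda>(a, b). \<alpha> * a + \<beta> * b)"
  define B where "B = (\<lambda>(a, b). T1 a * T2 b / of_nat ((d1 choose a) * (d2 choose b)))"
  define \<mu> where
    "\<mu> l = (\<Sum>p\<in>{..<b1} \<times> {..<b2}. B p * (\<omega> ^ l) ^ ((M - 1) * \<phi> p)) / of_nat M" for l
  have "\<forall>l. \<exists>z. z ^ d1 = \<mu> l"
    using nth_root_exists[OF \<open>0 < d1\<close>] by blast
  then obtain c where c: "c l ^ d1 = \<mu> l" for l
    by metis
  define v1 where "v1 l = (c l, c l * (\<omega> ^ l) ^ \<alpha>)" for l
  define v2 where "v2 l = (1 :: complex, (\<omega> ^ l) ^ \<beta>)" for l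
  have "tensor_prod T1 T2 i j = (\<Sum>l<M. pow_coeff d1 (v1 l) i * pow_coeff d2 (v2 l) j)"
    if ij: "i \<le> d1" "j \<le> d2" for i j
  proof -
    have "pow_coeff d1 (v1 l) i * pow_coeff d2 (v2 l) j
        = of_nat ((d1 choose i) * (d2 choose j)) * (\<mu> l * (\<omega> ^ l) ^ \<phi> (i, j))" for l
    proof -
      have "pow_coeff d1 (v1 l) i = of_nat (d1 choose i) * \<mu> l * (\<omega> ^ l) ^ (\<alpha> * i)"
        using ij by (simp add: v1_def pow_coeff_scale c power_mult)
      moreover have "pow_coeff d2 (v2 l) j = of_nat (d2 choose j) * (\<omega> ^ l) ^ (\<beta> * j)"
        by (simp add: v2_def pow_coeff_def power_mult)
      ultimately show ?thesis by (simp add: \<phi>_def power_add mult_ac)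
    qed
    then have "(\<Sum>l<M. pow_coeff d1 (v1 l) i * pow_coeff d2 (v2 l) j)
        = of_nat ((d1 choose i) * (d2 choose j)) * (\<Sum>l<M. \<mu> l * (\<omega> ^ l) ^ \<phi> (i, j))"
      by (simp add: sum_distrib_left)
    also have "(\<Sum>l<M. \<mu> l * (\<omega> ^ l) ^ \<phi> (i, j))
        = (if i < b1 \<and> j < b2 then B (i, j) else 0)"
      unfolding \<mu>_def \<omega>_def \<phi>_def
      by (rule separated_interpolation[OF \<open>0 < M\<close> ij separating[OF _ _ ij]])
    also have "of_nat ((d1 choose i) * (d2 choose j)) * \<dots> = T1 i * T2 j"
      using ij supp1[of i] supp2[of j] by (auto simp: B_def)
    finally show ?thesis by (simp add: tensor_prod_def)
  qed
  then show ?thesis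
    unfolding ps_rank_def by (intro Least_le) blast
qed

theorem proposition3p9:
  fixes d1 d2 b1 b2 :: nat and T1 T2 :: "nat \<Rightarrow> complex"
  assumes "2 \<le> b1" "2 * b1 \<le> d1" "2 \<le> b2" "2 * b2 \<le> d2"
    and "cactus_rank d1 T1 = b1" "in_span_scheme d1 b1 (Zgen b1) T1"
    and "cactus_rank d2 T2 = b2" "in_span_scheme d2 b2 (Zgen b2) T2"
  shows "ps_rank d1 d2 (tensor_prod T1 T2) \<le> d1 * b2 + d2 * b1 + b1 * b2 - 1"
proof -
  have "0 < d1" "0 < b1" "0 < b2" "b1 \<le> d1" "b2 \<le> d2"
    using assms(1-4) by linarith+
  then obtain \<alpha> \<beta> :: nat where separating:
    "\<And>a b i j. a < b1 \<Longrightarrow> b < b2 \<Longrightarrow> i \<le> d1 \<Longrightarrow> j \<le> d2 \<Longrightarrow>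
       [\<alpha> * i + \<beta> * j = \<alpha> * a + \<beta> * b] (mod d1 * b2 + d2 * b1 + gcd b1 b2) \<Longrightarrow> i = a \<and> j = b"
    using separating_exponents by blast
  have "ps_rank d1 d2 (tensor_prod T1 T2) \<le> d1 * b2 + d2 * b1 + gcd b1 b2"
    by (rule ps_rank_tensor_prod_le[OF \<open>0 < d1\<close> _ in_span_scheme_Zgen_coeff_eq_0[OF assms(6)]
          in_span_scheme_Zgen_coeff_eq_0[OF assms(8)] separating])
       (use \<open>0 < b1\<close> in simp_all)
  moreover have "gcd b1 b2 < b1 * b2"
    using gcd_le1_nat[of b1 b2] mult_le_mono2[OF assms(3), of b1] \<open>0 < b1\<close> by linarith
  ultimately show ?thesis by linarith
qed

end
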